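(* Let $G$ be a bipartite graph of boxicity $b$. Then $G$ belongs to $(b+1)$-CBU.
   Context: Let $e_1,\ldots,e_d$ be the standard orthogonal basis of $\mathbb{R}^d$. An axis-parallel box in $\mathbb{R}^d$ is a product $I_1\times\cdots\times I_d$ of closed intervals of positive length. For $d\ge 1$, a graph $G$ belongs to $d$-CBU if one can assign to each vertex an axis-parallel box in $\mathbb{R}^d$ such that the boxes have pairwise disjoint interiors, two distinct vertices are adjacent if and only if their boxes intersect, and any two intersecting boxes intersect in a $(d-1)$-dimensional box orthogonal to $e_1$ (i.e. lying in a hyperplane orthogonal to $e_1$). The boxicity of a graph is the minimum dimension $b$ such that the graph is the intersection graph of axis-parallel boxes in $\mathbb{R}^b$. *)

theory Defs
  imports Complex_Main
begin

definition is_graph :: "'a set \<Rightarrow> ('a \<Rightarrow> 'a \<Rightarrow> bool) \<Rightarrow> bool" where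
  "is_graph V E \<longleftrightarrow> (\<forall>u v. E u v \<longrightarrow> u \<in> V \<and> v \<in> V \<and> u \<noteq> v \<and> E v u)"

definition bipartite :: "'a set \<Rightarrow> ('a \<Rightarrow> 'a \<Rightarrow> bool) \<Rightarrow> bool" where
  "bipartite V E \<longleftrightarrow> (\<exists>A B. A \<union> B = V \<and> A \<inter> B = {} \<and>
      (\<forall>u\<in>A. \<forall>v\<in>A. \<not> E u v) \<and> (\<forall>u\<in>B. \<forall>v\<in>B. \<not> E u v))"

(* An axis-parallel box in R^d assigned to vertex v is the product over the
   coordinates i < d of the closed intervals [lo v i, hi v i].
   Coordinate 0 corresponds to e_1. *)
definition valid_boxes :: "nat \<Rightarrow> 'a set \<Rightarrow> ('a \<Rightarrow> nat \<Rightarrow> real) \<Rightarrow> ('a \<Rightarrow> nat \<Rightarrow> real) \<Rightarrow> bool" where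
  "valid_boxes d V lo hi \<longleftrightarrow> (\<forall>v\<in>V. \<forall>i<d. lo v i < hi v i)"

definition boxes_meet :: "nat \<Rightarrow> ('a \<Rightarrow> nat \<Rightarrow> real) \<Rightarrow> ('a \<Rightarrow> nat \<Rightarrow> real) \<Rightarrow> 'a \<Rightarrow> 'a \<Rightarrow> bool" where
  "boxes_meet d lo hi u v \<longleftrightarrow> (\<forall>i<d. max (lo u i) (lo v i) \<le> min (hi u i) (hi v i))"

definition interiors_disjoint :: "nat \<Rightarrow> ('a \<Rightarrow> nat \<Rightarrow> real) \<Rightarrow> ('a \<Rightarrow> nat \<Rightarrow> real) \<Rightarrow> 'a \<Rightarrow> 'a \<Rightarrow> bool" where
  "interiors_disjoint d lo hi u v \<longleftrightarrow> \<not> (\<forall>i<d. max (lo u i) (lo v i) < min (hi u i) (hi v i))"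

(* the intersection box is a (d-1)-dimensional box orthogonal to e_1:
   degenerate (a single point) in coordinate 0, positive length in all others *)
definition contact_orth_e1 :: "nat \<Rightarrow> ('a \<Rightarrow> nat \<Rightarrow> real) \<Rightarrow> ('a \<Rightarrow> nat \<Rightarrow> real) \<Rightarrow> 'a \<Rightarrow> 'a \<Rightarrow> bool" where
  "contact_orth_e1 d lo hi u v \<longleftrightarrow>
     max (lo u 0) (lo v 0) = min (hi u 0) (hi v 0) \<and>
     (\<forall>i. 0 < i \<and> i < d \<longrightarrow> max (lo u i) (lo v i) < min (hi u i) (hi v i))"

definition box_rep :: "nat \<Rightarrow> 'a set \<Rightarrow> ('a \<Rightarrow> 'a \<Rightarrow> bool) \<Rightarrow> bool" where
  "box_rep d V E \<longleftrightarrow> (\<exists>lo hi. valid_boxes d V lo hi \<and>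
      (\<forall>u\<in>V. \<forall>v\<in>V. u \<noteq> v \<longrightarrow> (E u v \<longleftrightarrow> boxes_meet d lo hi u v)))"

definition boxicity :: "'a set \<Rightarrow> ('a \<Rightarrow> 'a \<Rightarrow> bool) \<Rightarrow> nat" where
  "boxicity V E = (LEAST b. box_rep b V E)"

definition CBU :: "nat \<Rightarrow> 'a set \<Rightarrow> ('a \<Rightarrow> 'a \<Rightarrow> bool) \<Rightarrow> bool" where
  "CBU d V E \<longleftrightarrow> 1 \<le> d \<and> (\<exists>lo hi. valid_boxes d V lo hi \<and>
      (\<forall>u\<in>V. \<forall>v\<in>V. u \<noteq> v \<longrightarrow>
         interiors_disjoint d lo hi u v \<and>
         (E u v \<longleftrightarrow> boxes_meet d lo hi u v) \<and>
         (boxes_meet d lo hi u v \<longrightarrow> contact_orth_e1 d lo hi u v)))"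

end

theory Submission
  imports Defs
begin

text \<open>Take a box representation of G in dimension b. Replacing every endpoint by twice its rank
among the endpoints in its coordinate, and then widening each interval by 1/2 on both sides,
preserves which intervals meet while making every contact a proper overlap. A new first
coordinate then puts one side of the bipartition into [0,1] and the other into [1,2]: boxes of
adjacent vertices now touch exactly in the hyperplane x = 1, and all other pairs stay disjoint.\<close>

definition rank :: "'a::linorder set \<Rightarrow> 'a \<Rightarrow> nat" where
  "rank S x = card {z\<in>S. z < x}"

lemma rank_less_rank_iff:
  assumes "finite S" "x \<in> S" "y \<in> S"
  shows "rank S x < rank S y \<longleftrightarrow> x < y"
proof
  assume "x < y"
  then have "{z\<in>S. z < x} \<subset> {z\<in>S. z < y}"
    using assms(2) by auto
  then show "rank S x < rank S y"
    unfolding rank_def using assms(1) by (simp add: psubset_card_mono)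
next
  assume "rank S x < rank S y"
  moreover have "\<not> x < y \<Longrightarrow> rank S y \<le> rank S x"
    unfolding rank_def using assms(1) by (intro card_mono) auto
  ultimately show "x < y" by linarith
qed

lemma widened_rank_le_iff:
  assumes "finite S" "a \<in> S" "c \<in> S"
  shows "2 * real (rank S a) - 1/2 \<le> 2 * real (rank S c) + 1/2 \<longleftrightarrow> a \<le> c"
    and "2 * real (rank S a) - 1/2 < 2 * real (rank S c) + 1/2 \<longleftrightarrow> a \<le> c"
proof -
  have "a \<le> c \<longleftrightarrow> rank S a \<le> rank S c"
    using rank_less_rank_iff[OF assms(1,3,2)] by (simp add: not_less[symmetric])
  then show "2 * real (rank S a) - 1/2 \<le> 2 * real (rank S c) + 1/2 \<longleftrightarrow> a \<le> c"
    and "2 * real (rank S a) - 1/2 < 2 * real (rank S c) + 1/2 \<longleftrightarrow> a \<le> c"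
    by linarith+
qed

definition open_contacts :: "nat \<Rightarrow> 'a set \<Rightarrow> ('a \<Rightarrow> nat \<Rightarrow> real) \<Rightarrow> ('a \<Rightarrow> nat \<Rightarrow> real) \<Rightarrow> bool" where
  "open_contacts d V lo hi \<longleftrightarrow>
     (\<forall>u\<in>V. \<forall>v\<in>V. boxes_meet d lo hi u v \<longrightarrow> \<not> interiors_disjoint d lo hi u v)"

lemma open_contacts_boxes_exist:
  assumes "finite V" "valid_boxes d V lo hi"
  obtains lo' hi' where "valid_boxes d V lo' hi'" "open_contacts d V lo' hi'"
    and "\<And>u v. u \<in> V \<Longrightarrow> v \<in> V \<Longrightarrow> boxes_meet d lo' hi' u v \<longleftrightarrow> boxes_meet d lo hi u v"
proof -
  define S where "S i = (\<lambda>v. lo v i) ` V \<union> (\<lambda>v. hi v i) ` V" for i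
  define lo' where "lo' v i = 2 * real (rank (S i) (lo v i)) - 1/2" for v i
  define hi' where "hi' v i = 2 * real (rank (S i) (hi v i)) + 1/2" for v i
  have endpoint_le_iff: "lo' u i \<le> hi' v i \<longleftrightarrow> lo u i \<le> hi v i"
    "lo' u i < hi' v i \<longleftrightarrow> lo u i \<le> hi v i" if "u \<in> V" "v \<in> V" for u v i
  proof -
    have "finite (S i)" "lo u i \<in> S i" "hi v i \<in> S i"
      using assms(1) that unfolding S_def by auto
    from widened_rank_le_iff[OF this] show "lo' u i \<le> hi' v i \<longleftrightarrow> lo u i \<le> hi v i"
      "lo' u i < hi' v i \<longleftrightarrow> lo u i \<le> hi v i"
      unfolding lo'_def hi'_def by simp_all
  qed
  have overlap_iff:
    "max (lo' u i) (lo' v i) \<le> min (hi' u i) (hi' v i) \<longleftrightarrow> max (lo u i) (lo v i) \<le> min (hi u i) (hi v i)"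
    "max (lo' u i) (lo' v i) < min (hi' u i) (hi' v i) \<longleftrightarrow> max (lo u i) (lo v i) \<le> min (hi u i) (hi v i)"
    if "u \<in> V" "v \<in> V" for u v i
    using endpoint_le_iff[OF that(1,1)] endpoint_le_iff[OF that(1,2)]
      endpoint_le_iff[OF that(2,1)] endpoint_le_iff[OF that(2,2)] by auto
  have "valid_boxes d V lo' hi'"
    using assms(2) endpoint_le_iff unfolding valid_boxes_def by (meson less_imp_le)
  moreover have "open_contacts d V lo' hi'"
    unfolding open_contacts_def boxes_meet_def interiors_disjoint_def using overlap_iff by simp
  moreover have "boxes_meet d lo' hi' u v \<longleftrightarrow> boxes_meet d lo hi u v" if "u \<in> V" "v \<in> V" for u v
    unfolding boxes_meet_def using overlap_iff[OF that] by simp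
  ultimately show thesis using that by blast
qed

lemma CBU_Suc_if_bipartite:
  assumes "bipartite V E" "valid_boxes d V lo hi" "open_contacts d V lo hi"
    and rep: "\<forall>u\<in>V. \<forall>v\<in>V. u \<noteq> v \<longrightarrow> (E u v \<longleftrightarrow> boxes_meet d lo hi u v)"
  shows "CBU (Suc d) V E"
proof -
  obtain A B where AB: "A \<union> B = V" "A \<inter> B = {}"
    "\<forall>u\<in>A. \<forall>v\<in>A. \<not> E u v" "\<forall>u\<in>B. \<forall>v\<in>B. \<not> E u v"
    using assms(1) unfolding bipartite_def by blast
  define lo' where "lo' v = case_nat (if v \<in> A then 0 else 1) (lo v)" for v
  define hi' where "hi' v = case_nat (if v \<in> A then 1 else 2) (hi v)" for v
  have layers_meet: "max (lo' u 0) (lo' v 0) \<le> min (hi' u 0) (hi' v 0)" for u v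
    unfolding lo'_def hi'_def by simp
  have meet_iff: "boxes_meet (Suc d) lo' hi' u v \<longleftrightarrow> boxes_meet d lo hi u v" for u v
    using layers_meet[of u v] unfolding boxes_meet_def lo'_def hi'_def
    by (auto simp: less_Suc_eq_0_disj)
  have "valid_boxes (Suc d) V lo' hi'"
    using assms(2) unfolding valid_boxes_def lo'_def hi'_def by (auto simp: less_Suc_eq_0_disj)
  moreover have "interiors_disjoint (Suc d) lo' hi' u v \<and>
      (E u v \<longleftrightarrow> boxes_meet (Suc d) lo' hi' u v) \<and>
      (boxes_meet (Suc d) lo' hi' u v \<longrightarrow> contact_orth_e1 (Suc d) lo' hi' u v)"
    if u: "u \<in> V" and v: "v \<in> V" and "u \<noteq> v" for u v
  proof (cases "E u v")
    case True
    then have meet: "boxes_meet d lo hi u v"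
      using rep u v \<open>u \<noteq> v\<close> by blast
    then have overlap: "\<not> interiors_disjoint d lo hi u v"
      using assms(3) u v unfolding open_contacts_def by blast
    have "u \<in> A \<and> v \<in> B \<or> u \<in> B \<and> v \<in> A"
      using AB True u v by blast
    then have touch: "max (lo' u 0) (lo' v 0) = min (hi' u 0) (hi' v 0)"
      using AB(2) unfolding lo'_def hi'_def by auto
    show ?thesis
      using True meet overlap touch meet_iff
      unfolding interiors_disjoint_def contact_orth_e1_def lo'_def hi'_def
      by (auto simp: gr0_conv_Suc)
  next
    case False
    then have "\<not> boxes_meet d lo hi u v" using rep u v \<open>u \<noteq> v\<close> by blast
    then have "interiors_disjoint (Suc d) lo' hi' u v"
      unfolding boxes_meet_def interiors_disjoint_def lo'_def hi'_def by force
    with False show ?thesis using meet_iff \<open>\<not> boxes_meet d lo hi u v\<close> by blast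
  qed
  ultimately show ?thesis unfolding CBU_def by auto
qed

lemma box_rep_card:
  assumes "finite V" "is_graph V E"
  shows "box_rep (card V) V E"
proof -
  obtain f where f: "bij_betw f {..<card V} V"
    using ex_bij_betw_nat_finite[OF assms(1)] by (auto simp: lessThan_atLeast0)
  \<comment> \<open>Coordinate i separates the vertex f i from its non-neighbours.\<close>
  define lo where "lo v i = (if v = f i then 0 else if E (f i) v then 1 else 2 :: real)" for v i
  define hi where "hi v i = lo v i + 1" for v i
  have "valid_boxes (card V) V lo hi"
    unfolding valid_boxes_def hi_def by simp
  moreover have "E u v \<longleftrightarrow> boxes_meet (card V) lo hi u v"
    if uv: "u \<in> V" "v \<in> V" "u \<noteq> v" for u v
  proof
    assume "E u v"
    moreover from this have "E v u" using assms(2) unfolding is_graph_def by blast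
    ultimately show "boxes_meet (card V) lo hi u v"
      unfolding boxes_meet_def lo_def hi_def by auto
  next
    assume meet: "boxes_meet (card V) lo hi u v"
    obtain i where i: "i < card V" "f i = u"
      using f uv(1) by (metis bij_betw_iff_bijections lessThan_iff)
    show "E u v"
    proof (rule ccontr)
      assume "\<not> E u v"
      then have "lo u i = 0" "lo v i = 2"
        using i uv(3) unfolding lo_def by auto
      then show False
        using meet i(1) unfolding boxes_meet_def hi_def by force
    qed
  qed
  ultimately show ?thesis unfolding box_rep_def by blast
qed

lemma box_rep_boxicity:
  assumes "finite V" "is_graph V E"
  shows "box_rep (boxicity V E) V E"
  unfolding boxicity_def using box_rep_card[OF assms] by (rule LeastI)

theorem mainTheorem1:
  fixes V :: "'a set" and E :: "'a \<Rightarrow> 'a \<Rightarrow> bool" and b :: nat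
  assumes "finite V" and "is_graph V E" and "bipartite V E"
    and "boxicity V E = b"
  shows "CBU (b + 1) V E"
proof -
  obtain lo hi where "valid_boxes b V lo hi"
    and rep: "\<forall>u\<in>V. \<forall>v\<in>V. u \<noteq> v \<longrightarrow> (E u v \<longleftrightarrow> boxes_meet b lo hi u v)"
    using box_rep_boxicity[OF assms(1,2)] assms(4) unfolding box_rep_def by blast
  obtain lo' hi' where "valid_boxes b V lo' hi'" "open_contacts b V lo' hi'"
    and "\<And>u v. u \<in> V \<Longrightarrow> v \<in> V \<Longrightarrow> boxes_meet b lo' hi' u v \<longleftrightarrow> boxes_meet b lo hi u v"
    using open_contacts_boxes_exist[OF assms(1) \<open>valid_boxes b V lo hi\<close>] by blast
  with rep have "\<forall>u\<in>V. \<forall>v\<in>V. u \<noteq> v \<longrightarrow> (E u v \<longleftrightarrow> boxes_meet b lo' hi' u v)"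
    by simp
  then show ?thesis
    using CBU_Suc_if_bipartite[OF assms(3) \<open>valid_boxes b V lo' hi'\<close> \<open>open_contacts b V lo' hi'\<close>]
    by simp
qed

end
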